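(* Let $A\in\mathbb{R}^{n\times n}$ be entrywise nonnegative and nonsingular. Then $A$ is a Karamardian matrix if and only if $A$ is a $Q$-matrix (equivalently, if and only if all diagonal entries of $A$ are positive).
   Context: $A$ is a $Q$-matrix if for every $q\in\mathbb{R}^n$ the linear complementarity problem LCP$(A,q)$ (find $x\ge 0$ with $y=Ax+q\ge 0$ and $x^Ty=0$) has a solution. For $M\in\mathbb{R}^{n\times n}$ let $K_M=\mathbb{R}^n_+\cap R(M)$ and $K_M^*=\{y: x^Ty\ge 0\ \forall x\in K_M\}$ (one has $K_M^*=\mathbb{R}^n_++N(M^T)$, with interior $\{a+b: a>0,\ b\in N(M^T)\}$). For $q$, LCP$(M,K_M,q)$ is to find $x\in K_M$ with $Mx+q\in K_M^*$ and $x^T(Mx+q)=0$. $M$ is a Karamardian matrix if $K_M\ne\{0\}$ and there exists $d$ in the interior of $K_M^*$ such that both LCP$(M,K_M,0)$ and LCP$(M,K_M,d)$ have $x=0$ as their only solution. *)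

theory Defs
  imports "HOL-Analysis.Analysis"
begin

definition nonneg_vec :: "real ^ 'n \<Rightarrow> bool" where
  "nonneg_vec x \<longleftrightarrow> (\<forall>i. x $ i \<ge> 0)"

definition lcp_sol :: "real ^ 'n ^ 'n \<Rightarrow> real ^ 'n \<Rightarrow> real ^ 'n \<Rightarrow> bool" where
  "lcp_sol A q x \<longleftrightarrow> nonneg_vec x \<and> nonneg_vec (A *v x + q) \<and> x \<bullet> (A *v x + q) = 0"

definition Q_matrix :: "real ^ 'n ^ 'n \<Rightarrow> bool" where
  "Q_matrix A \<longleftrightarrow> (\<forall>q. \<exists>x. lcp_sol A q x)"

definition K_cone :: "real ^ 'n ^ 'n \<Rightarrow> (real ^ 'n) set" where
  "K_cone M = {x. nonneg_vec x} \<inter> range (\<lambda>z. M *v z)"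

definition K_dual :: "real ^ 'n ^ 'n \<Rightarrow> (real ^ 'n) set" where
  "K_dual M = {y. \<forall>x\<in>K_cone M. x \<bullet> y \<ge> 0}"

definition cone_lcp_sol :: "real ^ 'n ^ 'n \<Rightarrow> real ^ 'n \<Rightarrow> real ^ 'n \<Rightarrow> bool" where
  "cone_lcp_sol M q x \<longleftrightarrow> x \<in> K_cone M \<and> M *v x + q \<in> K_dual M \<and> x \<bullet> (M *v x + q) = 0"

definition Karamardian :: "real ^ 'n ^ 'n \<Rightarrow> bool" where
  "Karamardian M \<longleftrightarrow> K_cone M \<noteq> {0} \<and>
     (\<exists>d \<in> interior (K_dual M).
        (\<forall>x. cone_lcp_sol M 0 x \<longleftrightarrow> x = 0) \<and> (\<forall>x. cone_lcp_sol M d x \<longleftrightarrow> x = 0))"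

end

theory Submission
  imports Defs
begin

text \<open>
  For invertible \<open>A\<close> the cone \<open>K\<^sub>A\<close> is the whole nonnegative orthant, which is self-dual, so
  LCP\<open>(A, K\<^sub>A, q)\<close> is the standard LCP\<open>(A, q)\<close> and the interior of \<open>K\<^sub>A\<^sup>*\<close> contains the
  all-ones vector \<open>\<one>\<close>. For \<open>A \<ge> 0\<close>, LCP\<open>(A, \<one>)\<close> only has the zero solution, while LCP\<open>(A, 0)\<close>
  only has the zero solution iff the diagonal of \<open>A\<close> is positive: a zero diagonal entry
  \<open>a\<^sub>i\<^sub>i\<close> makes \<open>e\<^sub>i\<close> a solution. A zero \<open>a\<^sub>i\<^sub>i\<close> also defeats the \<open>Q\<close>-property at
  \<open>q = \<one> - 2e\<^sub>i\<close>; conversely, for a positive diagonal every LCP\<open>(A, q)\<close> is solved by a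
  Brouwer fixed point of the projected Jacobi map
  \<open>x\<^sub>i \<mapsto> max 0 (x\<^sub>i - (Ax + q)\<^sub>i / a\<^sub>i\<^sub>i)\<close> on the box \<open>[0, max 0 (-q\<^sub>i / a\<^sub>i\<^sub>i)]\<close>.
\<close>

lemma sum_pos_imp_ex_pos:
  fixes f :: "'a \<Rightarrow> 'b :: {ordered_comm_monoid_add, linorder}"
  assumes "sum f A > 0"
  shows "\<exists>a\<in>A. f a > 0"
proof (rule ccontr)
  assume "\<not> (\<exists>a\<in>A. f a > 0)"
  then have "sum f A \<le> 0"
    by (auto simp: not_less intro!: sum_nonpos)
  with assms show False
    by simp
qed

lemma eq_max_0_diff_divide_imp_complementary:
  fixes x w a :: real
  assumes "a > 0" "x = max 0 (x - w / a)"
  shows "x \<ge> 0 \<and> w \<ge> 0 \<and> x * w = 0"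
proof (cases "x = 0")
  case True
  then show ?thesis
    using assms by (auto simp: max_def divide_le_0_iff split: if_splits)
next
  case False
  then have "x > 0" "x = x - w / a"
    using assms(2) by (metis less_le max.cobounded1, metis max_def)
  then show ?thesis
    using assms(1) by simp
qed

lemma nonneg_inner_eq_0_imp_component:
  fixes x w :: "real ^ 'n"
  assumes "nonneg_vec x" "nonneg_vec w" "x \<bullet> w = 0"
  shows "x $ i * w $ i = 0"
proof -
  have "(\<Sum>j\<in>UNIV. x $ j * w $ j) = 0"
    using assms(3) by (simp add: inner_vec_def)
  moreover have "\<forall>j\<in>UNIV. 0 \<le> x $ j * w $ j"
    using assms(1,2) by (simp add: nonneg_vec_def)
  ultimately show ?thesis
    using sum_nonneg_eq_0_iff[of UNIV "\<lambda>j. x $ j * w $ j"] by auto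
qed

lemma nonneg_matrix_vector_mult_nonneg:
  fixes A :: "real ^ 'n ^ 'm"
  assumes "\<forall>i j. A $ i $ j \<ge> 0" "nonneg_vec x"
  shows "nonneg_vec (A *v x)"
  using assms by (auto simp: nonneg_vec_def matrix_vector_mult_def intro!: sum_nonneg)

lemma nonneg_matrix_vector_mult_ge_diag:
  fixes A :: "real ^ 'n ^ 'n"
  assumes "\<forall>i j. A $ i $ j \<ge> 0" "nonneg_vec x"
  shows "(A *v x) $ i \<ge> A $ i $ i * x $ i"
  unfolding matrix_vector_mult_def
  using assms by (auto simp: nonneg_vec_def intro!: member_le_sum[where f = "\<lambda>j. A $ i $ j * x $ j"])

lemma K_cone_invertible:
  fixes M :: "real ^ 'n ^ 'n"
  assumes "invertible M"
  shows "K_cone M = {x. nonneg_vec x}"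
proof -
  obtain B where B: "M ** B = mat 1"
    using assms by (auto simp: invertible_def)
  have "y \<in> range ((*v) M)" for y
    by (rule range_eqI[of _ _ "B *v y"]) (simp add: matrix_vector_mul_assoc B)
  then show ?thesis
    by (auto simp: K_cone_def)
qed

lemma K_dual_invertible:
  fixes M :: "real ^ 'n ^ 'n"
  assumes "invertible M"
  shows "K_dual M = {y. nonneg_vec y}"
proof (intro set_eqI iffI CollectI)
  fix y assume y: "y \<in> K_dual M"
  have "y $ i = axis i 1 \<bullet> y" for i
    by (simp add: cart_eq_inner_axis inner_commute)
  moreover have "axis i 1 \<in> K_cone M" for i
    by (simp add: K_cone_invertible[OF assms] nonneg_vec_def axis_def)
  ultimately show "nonneg_vec y"
    using y by (simp add: K_dual_def nonneg_vec_def)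
next
  fix y :: "real ^ 'n" assume "y \<in> {y. nonneg_vec y}"
  then show "y \<in> K_dual M"
    by (auto simp: K_dual_def K_cone_def nonneg_vec_def inner_vec_def intro!: sum_nonneg)
qed

lemma cone_lcp_sol_invertible:
  fixes M :: "real ^ 'n ^ 'n"
  assumes "invertible M"
  shows "cone_lcp_sol M q x \<longleftrightarrow> lcp_sol M q x"
  by (simp add: cone_lcp_sol_def lcp_sol_def K_cone_invertible[OF assms] K_dual_invertible[OF assms])

lemma positive_orthant_subset_interior:
  "{x :: real ^ 'n. \<forall>i. 0 < x $ i} \<subseteq> interior {x. nonneg_vec x}"
proof (rule interior_maximal)
  have "{x :: real ^ 'n. \<forall>i. 0 < x $ i} = (\<Inter>i. {x. 0 < x $ i})"
    by auto
  then show "open {x :: real ^ 'n. \<forall>i. 0 < x $ i}"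
    by (auto intro!: open_INT open_halfspace_component_gt_cart)
qed (auto simp: nonneg_vec_def less_imp_le)

lemma lcp_sol_zero_axis:
  fixes A :: "real ^ 'n ^ 'n"
  assumes nonneg: "\<forall>i j. A $ i $ j \<ge> 0" and a_ii: "A $ i $ i = 0"
  shows "lcp_sol A 0 (axis i 1)"
proof -
  have "axis i 1 \<bullet> (A *v axis i 1) = (A *v axis i 1) $ i"
    by (simp add: cart_eq_inner_axis inner_commute)
  also have "\<dots> = A $ i $ i"
    by (simp add: matrix_vector_mult_def axis_def if_distrib cong: if_cong)
  finally have "axis i 1 \<bullet> (A *v axis i 1) = 0"
    using a_ii by simp
  moreover have "nonneg_vec (axis i (1::real))"
    by (simp add: nonneg_vec_def axis_def)
  ultimately show ?thesis
    by (simp add: lcp_sol_def nonneg_matrix_vector_mult_nonneg[OF nonneg])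
qed

lemma lcp_sol_zero_trivial_iff_diag_pos:
  fixes A :: "real ^ 'n ^ 'n"
  assumes nonneg: "\<forall>i j. A $ i $ j \<ge> 0"
  shows "(\<forall>x. lcp_sol A 0 x \<longleftrightarrow> x = 0) \<longleftrightarrow> (\<forall>i. A $ i $ i > 0)"
proof
  assume trivial: "\<forall>x. lcp_sol A 0 x \<longleftrightarrow> x = 0"
  show "\<forall>i. A $ i $ i > 0"
  proof (rule ccontr)
    assume "\<not> (\<forall>i. A $ i $ i > 0)"
    then obtain i where "A $ i $ i = 0"
      using nonneg by (metis less_eq_real_def)
    then have "lcp_sol A 0 (axis i 1)"
      by (rule lcp_sol_zero_axis[OF nonneg])
    with trivial show False
      by (simp add: axis_eq_0_iff)
  qed
next
  assume diag: "\<forall>i. A $ i $ i > 0"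
  have "x = 0" if sol: "lcp_sol A 0 x" for x
  proof -
    have x: "nonneg_vec x" and Ax: "nonneg_vec (A *v x)" and compl: "x \<bullet> (A *v x) = 0"
      using sol by (auto simp: lcp_sol_def)
    have "x $ i = 0" for i
    proof -
      have "x $ i * (A *v x) $ i = 0"
        using nonneg_inner_eq_0_imp_component[OF x Ax compl] .
      moreover have "x $ i * (A $ i $ i * x $ i) \<le> x $ i * (A *v x) $ i"
        using x nonneg_matrix_vector_mult_ge_diag[OF nonneg x]
        by (simp add: nonneg_vec_def mult_left_mono)
      ultimately have "A $ i $ i * x $ i ^ 2 \<le> 0"
        by (metis power2_eq_square mult.left_commute)
      then show ?thesis
        using diag[rule_format, of i] by (simp add: mult_le_0_iff)
    qed
    then show "x = 0"
      by (simp add: vec_eq_iff)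
  qed
  then show "\<forall>x. lcp_sol A 0 x \<longleftrightarrow> x = 0"
    by (auto simp: lcp_sol_def nonneg_vec_def)
qed

lemma lcp_sol_one_trivial:
  fixes A :: "real ^ 'n ^ 'n"
  assumes nonneg: "\<forall>i j. A $ i $ j \<ge> 0"
  shows "lcp_sol A (\<chi> i. 1) x \<longleftrightarrow> x = 0"
proof
  assume sol: "lcp_sol A (\<chi> i. 1) x"
  then have x: "nonneg_vec x" and w: "nonneg_vec (A *v x + (\<chi> i. 1))"
    and compl: "x \<bullet> (A *v x + (\<chi> i. 1)) = 0"
    by (auto simp: lcp_sol_def)
  have "x $ i = 0" for i
  proof -
    have "(A *v x) $ i \<ge> 0"
      using nonneg_matrix_vector_mult_nonneg[OF nonneg x] by (simp add: nonneg_vec_def)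
    with nonneg_inner_eq_0_imp_component[OF x w compl, of i] show ?thesis
      by simp
  qed
  then show "x = 0"
    by (simp add: vec_eq_iff)
qed (simp add: lcp_sol_def nonneg_vec_def)

theorem Karamardian_iff_diag_pos:
  fixes A :: "real ^ 'n ^ 'n"
  assumes nonneg: "\<forall>i j. A $ i $ j \<ge> 0" and inv: "invertible A"
  shows "Karamardian A \<longleftrightarrow> (\<forall>i. A $ i $ i > 0)"
proof -
  have sol: "cone_lcp_sol A q x \<longleftrightarrow> lcp_sol A q x" for q x
    by (rule cone_lcp_sol_invertible[OF inv])
  have "(\<chi> i. 1) \<in> K_cone A" "(\<chi> i. 1) \<noteq> (0 :: real ^ 'n)"
    by (simp_all add: K_cone_invertible[OF inv] nonneg_vec_def vec_eq_iff)
  then have "K_cone A \<noteq> {0}"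
    by blast
  moreover have "(\<chi> i. 1) \<in> interior (K_dual A)"
    using positive_orthant_subset_interior by (auto simp: K_dual_invertible[OF inv])
  ultimately show ?thesis
    unfolding Karamardian_def sol
    using lcp_sol_zero_trivial_iff_diag_pos[OF nonneg] lcp_sol_one_trivial[OF nonneg]
    by blast
qed

lemma Q_matrix_imp_diag_pos:
  fixes A :: "real ^ 'n ^ 'n"
  assumes nonneg: "\<forall>i j. A $ i $ j \<ge> 0" and Q: "Q_matrix A"
  shows "A $ i $ i > 0"
proof (rule ccontr)
  assume "\<not> A $ i $ i > 0"
  then have a_ii: "A $ i $ i = 0"
    using nonneg by (metis less_eq_real_def)
  define q :: "real ^ 'n" where "q = (\<chi> j. if j = i then -1 else 1)"
  obtain x where "lcp_sol A q x"
    using Q by (auto simp: Q_matrix_def)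
  then have x: "nonneg_vec x" and w: "nonneg_vec (A *v x + q)" and compl: "x \<bullet> (A *v x + q) = 0"
    by (auto simp: lcp_sol_def)
  have "(\<Sum>j\<in>UNIV. A $ i $ j * x $ j) \<ge> 1"
    using w[unfolded nonneg_vec_def, rule_format, of i]
    by (simp add: q_def matrix_vector_mult_def)
  then have "(\<Sum>j\<in>UNIV. A $ i $ j * x $ j) > 0"
    by linarith
  then obtain j where j: "A $ i $ j * x $ j > 0"
    using sum_pos_imp_ex_pos by blast
  then have "j \<noteq> i"
    using a_ii by auto
  moreover have "x $ j > 0"
    using j x[unfolded nonneg_vec_def, rule_format, of j]
    by (metis less_eq_real_def mult_zero_right)
  moreover have "(A *v x) $ j \<ge> 0"
    using nonneg_matrix_vector_mult_nonneg[OF nonneg x] by (simp add: nonneg_vec_def)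
  ultimately have "x $ j * (A *v x + q) $ j > 0"
    by (simp add: q_def)
  with nonneg_inner_eq_0_imp_component[OF x w compl, of j] show False
    by linarith
qed

definition projected_jacobi :: "real ^ 'n ^ 'n \<Rightarrow> real ^ 'n \<Rightarrow> real ^ 'n \<Rightarrow> real ^ 'n" where
  "projected_jacobi A q x = (\<chi> i. max 0 (x $ i - (A *v x + q) $ i / A $ i $ i))"

lemma projected_jacobi_fixpoint_imp_lcp_sol:
  fixes A :: "real ^ 'n ^ 'n"
  assumes diag: "\<forall>i. A $ i $ i > 0" and fixpoint: "projected_jacobi A q x = x"
  shows "lcp_sol A q x"
proof -
  define w where "w = A *v x + q"
  have "x $ i = max 0 (x $ i - w $ i / A $ i $ i)" for i
    using arg_cong[OF fixpoint, of "\<lambda>v. v $ i"] by (simp add: projected_jacobi_def w_def)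
  then have complementary: "x $ i \<ge> 0 \<and> w $ i \<ge> 0 \<and> x $ i * w $ i = 0" for i
    using diag eq_max_0_diff_divide_imp_complementary by blast
  then have "x \<bullet> w = 0"
    unfolding inner_vec_def inner_real_def by (intro sum.neutral) blast
  then show ?thesis
    using complementary by (simp add: lcp_sol_def nonneg_vec_def w_def)
qed

lemma projected_jacobi_maps_box:
  fixes A :: "real ^ 'n ^ 'n" and q :: "real ^ 'n"
  defines "u \<equiv> \<chi> i. max 0 (- q $ i / A $ i $ i)"
  assumes nonneg: "\<forall>i j. A $ i $ j \<ge> 0" and diag: "\<forall>i. A $ i $ i > 0"
    and x: "x \<in> cbox 0 u"
  shows "projected_jacobi A q x \<in> cbox 0 u"
proof -
  have "nonneg_vec x"
    using x by (simp add: mem_box_cart nonneg_vec_def)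
  have bound: "x $ i - (A *v x + q) $ i / A $ i $ i \<le> - q $ i / A $ i $ i" for i
  proof -
    have a_ii: "A $ i $ i > 0"
      using diag by simp
    have "x $ i - (A *v x + q) $ i / A $ i $ i = (A $ i $ i * x $ i - (A *v x) $ i - q $ i) / A $ i $ i"
      using a_ii by (simp add: field_simps)
    also have "\<dots> \<le> - q $ i / A $ i $ i"
      using a_ii nonneg_matrix_vector_mult_ge_diag[OF nonneg \<open>nonneg_vec x\<close>, of i]
      by (intro divide_right_mono) auto
    finally show ?thesis .
  qed
  have "projected_jacobi A q x $ i \<le> u $ i" for i
    unfolding projected_jacobi_def u_def vec_lambda_beta by (rule max.mono[OF order_refl bound])
  then show ?thesis
    by (simp add: mem_box_cart projected_jacobi_def)
qed

lemma diag_pos_imp_Q_matrix: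
  fixes A :: "real ^ 'n ^ 'n"
  assumes nonneg: "\<forall>i j. A $ i $ j \<ge> 0" and diag: "\<forall>i. A $ i $ i > 0"
  shows "Q_matrix A"
  unfolding Q_matrix_def
proof
  fix q :: "real ^ 'n"
  define u :: "real ^ 'n" where "u = (\<chi> i. max 0 (- q $ i / A $ i $ i))"
  have "continuous_on (cbox 0 u) (projected_jacobi A q)"
    unfolding projected_jacobi_def matrix_vector_mult_def
    using diag by (intro continuous_intros) (auto simp: less_le)
  moreover have "projected_jacobi A q \<in> cbox 0 u \<rightarrow> cbox 0 u"
    using projected_jacobi_maps_box[OF nonneg diag] by (auto simp: u_def)
  moreover have "0 \<in> cbox 0 u"
    by (simp add: mem_box_cart u_def)
  ultimately obtain x where "projected_jacobi A q x = x"
    using brouwer[of "cbox 0 u" "projected_jacobi A q"] by auto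
  then show "\<exists>x. lcp_sol A q x"
    using projected_jacobi_fixpoint_imp_lcp_sol[OF diag] by blast
qed

theorem Q_matrix_iff_diag_pos:
  fixes A :: "real ^ 'n ^ 'n"
  assumes "\<forall>i j. A $ i $ j \<ge> 0"
  shows "Q_matrix A \<longleftrightarrow> (\<forall>i. A $ i $ i > 0)"
  using Q_matrix_imp_diag_pos[OF assms] diag_pos_imp_Q_matrix[OF assms] by blast

theorem mainTheorem17:
  fixes A :: "real ^ 'n ^ 'n"
  assumes "\<forall>i j. A $ i $ j \<ge> 0"
    and "invertible A"
  shows "(Karamardian A \<longleftrightarrow> Q_matrix A) \<and> (Q_matrix A \<longleftrightarrow> (\<forall>i. A $ i $ i > 0))"
  using Karamardian_iff_diag_pos[OF assms] Q_matrix_iff_diag_pos[OF assms(1)] by blast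

end
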